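(* For every sufficiently small $\varepsilon>0$ there exists $\gamma_0>0$ such that for every $\gamma\in(0,\gamma_0]$ there exists $n_0$ such that for all $n\ge n_0$: if $G$ is a graph on $n$ vertices with $\delta(G)\ge n/2$ that is $\gamma$-close to $2K_{n/2}$, then $G$ is an $\varepsilon$-superextremal two-clique with some partition $V(G)=A\uplus B$ satisfying (A1)–(A5), and moreover, either every vertex of $G$ has at least one neighbour in the other part (i.e. $G[A,B]$ has minimum degree at least $1$), or every vertex of one of the parts $A$, $B$ has at least $2$ neighbours in the other part.
   Context: A graph $G$ on $n$ vertices is $\gamma$-close to $2K_{n/2}$ if there exists $A\subseteq V(G)$ with $|A|=\lfloor n/2\rfloor$ such that the number of edges between $A$ and $V(G)\setminus A$ is at most $\gamma n^2$. For $X\subseteq V(G)$, $d(v,X)$ is the number of neighbours of $v$ in $X$. A graph $G$ on $n$ vertices is an $\varepsilon$-superextremal two-clique if there is a partition $V(G)=A\uplus B$ with: (A1) $||A|-|B||\le\varepsilon n$; (A2) $d(a,A)\ge(1/2-\varepsilon)n$ for all but at most $\varepsilon n$ vertices $a\in A$; (A3) $d(a,A)\ge(1/4-\varepsilon)n$ for all $a\in A$; (A4) $d(b,B)\ge(1/2-\varepsilon)n$ for all but at most $\varepsilon n$ vertices $b\in B$; (A5) $d(b,B)\ge(1/4-\varepsilon)n$ for all $b\in B$. *)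

theory Defs
  imports Complex_Main
begin

text \<open>A finite simple graph: a finite vertex set V (of naturals) with a symmetric,
irreflexive adjacency relation E; only adjacencies inside V are ever counted.\<close>
definition simple_graph :: "nat set \<Rightarrow> (nat \<Rightarrow> nat \<Rightarrow> bool) \<Rightarrow> bool" where
  "simple_graph V E \<longleftrightarrow> finite V \<and> (\<forall>x y. E x y \<longrightarrow> E y x) \<and> (\<forall>x. \<not> E x x)"

definition deg_in :: "(nat \<Rightarrow> nat \<Rightarrow> bool) \<Rightarrow> nat \<Rightarrow> nat set \<Rightarrow> nat" where
  "deg_in E v X = card {u \<in> X. E v u}"

definition min_degree_ge :: "nat set \<Rightarrow> (nat \<Rightarrow> nat \<Rightarrow> bool) \<Rightarrow> real \<Rightarrow> bool" where
  "min_degree_ge V E d \<longleftrightarrow> (\<forall>v\<in>V. real (deg_in E v V) \<ge> d)"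

definition edges_between :: "(nat \<Rightarrow> nat \<Rightarrow> bool) \<Rightarrow> nat set \<Rightarrow> nat set \<Rightarrow> nat" where
  "edges_between E X Y = card {(x, y). x \<in> X \<and> y \<in> Y \<and> E x y}"

definition close_to_two_cliques :: "nat set \<Rightarrow> (nat \<Rightarrow> nat \<Rightarrow> bool) \<Rightarrow> real \<Rightarrow> bool" where
  "close_to_two_cliques V E \<gamma> \<longleftrightarrow>
     (\<exists>A \<subseteq> V. card A = card V div 2 \<and>
        real (edges_between E A (V - A)) \<le> \<gamma> * (real (card V))\<^sup>2)"

definition superextremal_partition ::
  "nat set \<Rightarrow> (nat \<Rightarrow> nat \<Rightarrow> bool) \<Rightarrow> real \<Rightarrow> nat set \<Rightarrow> nat set \<Rightarrow> bool" where
  "superextremal_partition V E \<epsilon> A B \<longleftrightarrow>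
     (let n = real (card V) in
       A \<union> B = V \<and> A \<inter> B = {} \<and>
       \<bar>real (card A) - real (card B)\<bar> \<le> \<epsilon> * n \<and>
       real (card {a \<in> A. real (deg_in E a A) < (1/2 - \<epsilon>) * n}) \<le> \<epsilon> * n \<and>
       (\<forall>a\<in>A. real (deg_in E a A) \<ge> (1/4 - \<epsilon>) * n) \<and>
       real (card {b \<in> B. real (deg_in E b B) < (1/2 - \<epsilon>) * n}) \<le> \<epsilon> * n \<and>
       (\<forall>b\<in>B. real (deg_in E b B) \<ge> (1/4 - \<epsilon>) * n))"

end

theory Submission imports Defs begin

text \<open>Start from a half A0 of V with at most \<gamma>n^2 cross edges. Since every cross edge is
counted once from each side, at most 4\<gamma>n/\<epsilon> \<le> \<epsilon>n/4 vertices have more than \<epsilon>n/2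
neighbours on the other side; call them exceptional and move each of them to the side
where it has more neighbours. By the minimum degree condition an unexceptional vertex
keeps at least n/2 - \<epsilon>n/2 - \<epsilon>n/4 neighbours in its own part and an exceptional one at
least n/4 - \<epsilon>n/4, which gives (A1)--(A5). Finally, \<delta>(G) \<ge> n/2 forces a vertex in a part
of size s to have at least n/2 - s + 1 neighbours in the other part: at least 1 if the
parts are equal, and at least 2 for every vertex of the smaller part otherwise.\<close>

lemma deg_in_split:
  assumes "finite V" "C \<subseteq> V"
  shows "deg_in E v V = deg_in E v C + deg_in E v (V - C)"
proof -
  have "{u\<in>V. E v u} = {u\<in>C. E v u} \<union> {u\<in>V - C. E v u}" using assms by auto
  moreover have "finite C" using assms finite_subset by blast
  ultimately show ?thesis
    unfolding deg_in_def using assms by (simp add: card_Un_disjoint disjoint_iff)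
qed

lemma deg_in_le_card_minus_one:
  assumes "finite X" "v \<in> X" "\<not> E v v"
  shows "deg_in E v X \<le> card X - 1"
proof -
  have "{u\<in>X. E v u} \<subseteq> X - {v}" using assms by auto
  then have "card {u\<in>X. E v u} \<le> card (X - {v})" using assms by (intro card_mono) auto
  then show ?thesis unfolding deg_in_def using assms by simp
qed

lemma deg_in_le_add_card:
  assumes "C0 - X \<subseteq> C" "finite C" "finite X"
  shows "deg_in E v C0 \<le> deg_in E v C + card X"
proof -
  have "{u\<in>C0. E v u} \<subseteq> {u\<in>C. E v u} \<union> X" using assms by auto
  then have "card {u\<in>C0. E v u} \<le> card ({u\<in>C. E v u} \<union> X)"
    by (intro card_mono) (use assms in auto)
  also have "\<dots> \<le> card {u\<in>C. E v u} + card X" by (rule card_Un_le)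
  finally show ?thesis unfolding deg_in_def .
qed

lemma edges_between_eq_sum_deg_in:
  assumes "finite A" "finite B"
  shows "edges_between E A B = (\<Sum>a\<in>A. deg_in E a B)"
proof -
  have "{(x, y). x \<in> A \<and> y \<in> B \<and> E x y} = Sigma A (\<lambda>x. {y\<in>B. E x y})" by auto
  then show ?thesis unfolding edges_between_def deg_in_def using assms by simp
qed

lemma edges_between_commute:
  assumes "\<And>x y. E x y \<Longrightarrow> E y x"
  shows "edges_between E A B = edges_between E B A"
proof -
  have "{(x, y). x \<in> B \<and> y \<in> A \<and> E x y} = prod.swap ` {(x, y). x \<in> A \<and> y \<in> B \<and> E x y}"
    using assms by auto
  then show ?thesis unfolding edges_between_def by (simp add: card_image)
qed

lemma card_gt_mult_le_sum:
  fixes f :: "'a \<Rightarrow> nat"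
  assumes "finite S" "0 < t"
  shows "real (card {v\<in>S. t < real (f v)}) * t \<le> real (\<Sum>v\<in>S. f v)"
proof -
  have "real (card {v\<in>S. t < real (f v)}) * t = (\<Sum>v\<in>{v\<in>S. t < real (f v)}. t)" by simp
  also have "\<dots> \<le> (\<Sum>v\<in>{v\<in>S. t < real (f v)}. real (f v))" by (intro sum_mono) auto
  also have "\<dots> \<le> (\<Sum>v\<in>S. real (f v))" by (intro sum_mono2) (use assms in auto)
  finally show ?thesis by simp
qed

definition high_cross_degree :: "(nat \<Rightarrow> nat \<Rightarrow> bool) \<Rightarrow> nat set \<Rightarrow> nat set \<Rightarrow> real \<Rightarrow> nat set" where
  "high_cross_degree E A B t = {v\<in>A. t < real (deg_in E v B)} \<union> {v\<in>B. t < real (deg_in E v A)}"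

lemma card_high_cross_degree:
  assumes "finite A" "finite B" "0 < t" "\<And>x y. E x y \<Longrightarrow> E y x"
  shows "real (card (high_cross_degree E A B t)) * t \<le> 2 * real (edges_between E A B)"
proof -
  let ?HA = "{v\<in>A. t < real (deg_in E v B)}" and ?HB = "{v\<in>B. t < real (deg_in E v A)}"
  have "real (card ?HA) * t \<le> real (edges_between E A B)"
    using card_gt_mult_le_sum[OF assms(1,3)] by (simp add: edges_between_eq_sum_deg_in assms)
  moreover have "real (card ?HB) * t \<le> real (edges_between E B A)"
    using card_gt_mult_le_sum[OF assms(2,3)] by (simp add: edges_between_eq_sum_deg_in assms)
  then have "real (card ?HB) * t \<le> real (edges_between E A B)"
    using edges_between_commute[of E A B] assms(4) by simp
  moreover have "card (high_cross_degree E A B t) \<le> card ?HA + card ?HB"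
    unfolding high_cross_degree_def by (rule card_Un_le)
  then have "real (card (high_cross_degree E A B t)) * t \<le> real (card ?HA) * t + real (card ?HB) * t"
    using mult_right_mono[OF _ less_imp_le[OF assms(3)], of "real (card (high_cross_degree E A B t))"
      "real (card ?HA) + real (card ?HB)"] by (simp add: distrib_right)
  ultimately show ?thesis by linarith
qed

lemma card_high_cross_degree_le:
  fixes \<epsilon> \<gamma> :: real
  assumes "finite A" "finite B" "\<And>x y. E x y \<Longrightarrow> E y x" "0 < \<epsilon> * n" "\<gamma> \<le> \<epsilon>\<^sup>2 / 16"
    and "real (edges_between E A B) \<le> \<gamma> * (real n)\<^sup>2"
  shows "real (card (high_cross_degree E A B (\<epsilon> * n / 2))) \<le> \<epsilon> * n / 4"
proof -
  let ?t = "\<epsilon> * n / 2"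
  have "real (card (high_cross_degree E A B ?t)) * ?t \<le> 2 * (\<gamma> * (real n)\<^sup>2)"
    using card_high_cross_degree[of A B ?t E] assms by fastforce
  also have "\<dots> \<le> (\<epsilon> * n / 4) * ?t"
    using mult_right_mono[OF assms(5), of "(real n)\<^sup>2"] by (simp add: power2_eq_square algebra_simps)
  finally show ?thesis by (rule mult_right_le_imp_le) (use assms(4) in simp)
qed

lemma card_partition_balanced:
  assumes "A \<union> B = V" "A \<inter> B = {}" "finite V" "card A0 = card V div 2"
    and "\<bar>real (card A) - real (card A0)\<bar> \<le> s" "2 * s + 1 \<le> c"
  shows "\<bar>real (card A) - real (card B)\<bar> \<le> c"
proof -
  have "card V = card A + card B" using assms(1-3) by (metis card_Un_disjoint finite_Un)
  moreover have "2 * real (card A0) \<le> card V" "card V \<le> 2 * real (card A0) + 1"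
    using assms(4) by linarith+
  ultimately show ?thesis using assms(5,6) by linarith
qed

text \<open>C is the part replacing C0 once the exceptional vertices X have been redistributed;
a vertex of X lands in C only if it has at least as many neighbours in C0 as outside.\<close>

lemma moved_part_degrees:
  fixes \<epsilon> t s :: real
  assumes V: "finite V" "card V = n" "min_degree_ge V E (real n / 2)"
    and parts: "C0 \<subseteq> V" "X \<subseteq> V" "C0 - X \<subseteq> C" "C \<subseteq> C0 \<union> X"
    and low: "\<forall>v\<in>C0 - X. real (deg_in E v (V - C0)) \<le> t"
    and moved: "\<forall>x\<in>C \<inter> X. deg_in E x (V - C0) \<le> deg_in E x C0"
    and X: "real (card X) \<le> s" "t + s \<le> \<epsilon> * n" "s \<le> \<epsilon> * n"
  shows "\<forall>v\<in>C. (1/4 - \<epsilon>) * n \<le> real (deg_in E v C)"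
    and "{v\<in>C. real (deg_in E v C) < (1/2 - \<epsilon>) * n} \<subseteq> X"
proof -
  have "finite C0" "finite X" using finite_subset V(1) parts(1,2) by auto
  then have fin: "finite C" "finite X" using finite_subset[OF parts(4)] by auto
  have total: "real n / 2 \<le> real (deg_in E v C0) + real (deg_in E v (V - C0))" if "v \<in> V" for v
    using V(3) that deg_in_split[OF V(1) parts(1), of E v] unfolding min_degree_ge_def by auto
  have shift: "real (deg_in E v C0) \<le> real (deg_in E v C) + s" for v
    using deg_in_le_add_card[OF parts(3) fin, of E v] X(1) by linarith
  have good: "(1/2 - \<epsilon>) * n \<le> real (deg_in E v C)" if "v \<in> C" "v \<notin> X" for v
  proof -
    have "v \<in> C0 - X" "v \<in> V" using that parts by auto
    then have "real (deg_in E v (V - C0)) \<le> t" using low by blast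
    moreover have "(1/2 - \<epsilon>) * n = n / 2 - \<epsilon> * n" by (simp add: algebra_simps)
    ultimately show ?thesis using total[OF \<open>v \<in> V\<close>] shift[of v] X(2) by linarith
  qed
  have exceptional: "(1/4 - \<epsilon>) * n \<le> real (deg_in E v C)" if "v \<in> C" "v \<in> X" for v
  proof -
    have "v \<in> V" using that parts by auto
    moreover have "deg_in E v (V - C0) \<le> deg_in E v C0" using moved that by blast
    moreover have "(1/4 - \<epsilon>) * n = n / 4 - \<epsilon> * n" by (simp add: algebra_simps)
    ultimately show ?thesis using total[of v] shift[of v] X(3) by linarith
  qed
  show "\<forall>v\<in>C. (1/4 - \<epsilon>) * n \<le> real (deg_in E v C)"
  proof
    fix v assume "v \<in> C"
    have "(1/4 - \<epsilon>) * n \<le> (1/2 - \<epsilon>) * n" by (simp add: algebra_simps)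
    then show "(1/4 - \<epsilon>) * n \<le> real (deg_in E v C)"
      using good[OF \<open>v \<in> C\<close>] exceptional[OF \<open>v \<in> C\<close>] by (cases "v \<in> X") auto
  qed
  show "{v\<in>C. real (deg_in E v C) < (1/2 - \<epsilon>) * n} \<subseteq> X"
    using good by force
qed

lemma card_moved_part:
  assumes "C0 - X \<subseteq> C" "C \<subseteq> C0 \<union> X" "finite C0" "finite X"
  shows "\<bar>real (card C) - real (card C0)\<bar> \<le> real (card X)"
proof -
  have "finite C" using finite_subset[OF assms(2)] assms(3,4) by simp
  have "card C \<le> card (C0 \<union> X)" using assms by (intro card_mono) auto
  also have "\<dots> \<le> card C0 + card X" by (rule card_Un_le)
  moreover have "card C0 \<le> card (C \<union> X)" using assms \<open>finite C\<close> by (intro card_mono) auto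
  moreover have "\<dots> \<le> card C + card X" by (rule card_Un_le)
  ultimately show ?thesis by linarith
qed

lemma superextremal_partition_if_close:
  fixes \<epsilon> \<gamma> :: real
  assumes \<epsilon>: "0 < \<epsilon>" "2 / \<epsilon> \<le> real n" and \<gamma>: "\<gamma> \<le> \<epsilon>\<^sup>2 / 16"
    and G: "simple_graph V E" "card V = n" "min_degree_ge V E (real n / 2)"
    and A0: "A0 \<subseteq> V" "card A0 = n div 2" "real (edges_between E A0 (V - A0)) \<le> \<gamma> * (real n)\<^sup>2"
  shows "\<exists>A B. superextremal_partition V E \<epsilon> A B"
proof -
  have fin: "finite V" "finite A0" "finite (V - A0)" and sym: "\<And>x y. E x y \<Longrightarrow> E y x"
    using G(1) A0(1) finite_subset unfolding simple_graph_def by auto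
  have \<epsilon>n: "2 \<le> \<epsilon> * n" using \<epsilon> by (simp add: field_simps)
  define t where "t = \<epsilon> * n / 2"
  define X where "X = high_cross_degree E A0 (V - A0) t"
  define A where "A = (A0 - X) \<union> {x\<in>X. deg_in E x (V - A0) \<le> deg_in E x A0}"
  define B where "B = V - A"
  have XV: "X \<subseteq> V" using A0(1) unfolding X_def high_cross_degree_def by auto
  have cX: "real (card X) \<le> \<epsilon> * n / 4"
    using card_high_cross_degree_le[OF fin(2,3) sym _ \<gamma> A0(3)] \<epsilon>n unfolding X_def t_def by simp
  have low: "\<forall>v\<in>A0 - X. real (deg_in E v (V - A0)) \<le> t"
      "\<forall>v\<in>(V - A0) - X. real (deg_in E v A0) \<le> t"
    unfolding X_def high_cross_degree_def by auto
  have "t + \<epsilon> * n / 4 \<le> \<epsilon> * n" "\<epsilon> * n / 4 \<le> \<epsilon> * n" using \<epsilon>n t_def by auto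
  note moved_part = moved_part_degrees[OF fin(1) G(2,3) _ XV _ _ _ _ cX this]
  have A_parts: "A0 - X \<subseteq> A" "A \<subseteq> A0 \<union> X"
      "\<forall>x\<in>A \<inter> X. deg_in E x (V - A0) \<le> deg_in E x A0"
    unfolding A_def by auto
  note degA = moved_part[OF A0(1) A_parts(1,2) low(1) A_parts(3)]
  have B_parts: "V - A0 \<subseteq> V" "(V - A0) - X \<subseteq> B" "B \<subseteq> (V - A0) \<union> X"
    unfolding A_def B_def by auto
  have "\<forall>x\<in>B \<inter> X. deg_in E x A0 \<le> deg_in E x (V - A0)"
    unfolding A_def B_def by auto
  moreover have "V - (V - A0) = A0" using A0(1) by auto
  ultimately have "\<forall>v\<in>(V - A0) - X. real (deg_in E v (V - (V - A0))) \<le> t"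
      "\<forall>x\<in>B \<inter> X. deg_in E x (V - (V - A0)) \<le> deg_in E x (V - A0)"
    using low(2) by simp_all
  note degB = moved_part[OF B_parts this]
  have finX: "finite X" using finite_subset[OF XV fin(1)] .
  have AV: "A \<subseteq> V" using A0(1) XV A_parts(2) by auto
  have AB: "A \<union> B = V" "A \<inter> B = {}" using AV unfolding B_def by auto
  have "\<bar>real (card A) - real (card B)\<bar> \<le> \<epsilon> * n"
    using card_partition_balanced[OF AB fin(1), of A0 "real (card X)"]
      card_moved_part[OF A_parts(1,2) fin(2) finX] A0(2) G(2) cX \<epsilon>n by simp
  moreover have "real (card {v\<in>C. real (deg_in E v C) < (1/2 - \<epsilon>) * n}) \<le> \<epsilon> * n"
    if "{v\<in>C. real (deg_in E v C) < (1/2 - \<epsilon>) * n} \<subseteq> X" for C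
  proof -
    have "card {v\<in>C. real (deg_in E v C) < (1/2 - \<epsilon>) * n} \<le> card X" by (rule card_mono[OF finX that])
    then show ?thesis using cX \<epsilon>n by linarith
  qed
  ultimately have "superextremal_partition V E \<epsilon> A B"
    using AB degA degB G(2) unfolding superextremal_partition_def Let_def by blast
  then show ?thesis by blast
qed

lemma cross_deg_in_lower_bound:
  assumes G: "simple_graph V E" "min_degree_ge V E (real (card V) / 2)"
    and part: "X \<union> Y = V" "X \<inter> Y = {}" and "a \<in> X"
  shows "real (card V) / 2 - real (card X) + 1 \<le> real (deg_in E a Y)"
proof -
  have fin: "finite V" "finite X" and "\<not> E a a"
    using G(1) part(1) unfolding simple_graph_def by auto
  have "Y = V - X" using part by auto
  then have "deg_in E a V = deg_in E a X + deg_in E a Y"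
    using deg_in_split[of V X E a] fin part(1) by auto
  moreover have "deg_in E a X \<le> card X - 1"
    using deg_in_le_card_minus_one[of X a E] fin \<open>a \<in> X\<close> \<open>\<not> E a a\<close> by blast
  moreover have "1 \<le> card X" using \<open>a \<in> X\<close> fin(2) by (auto simp: Suc_le_eq card_gt_0_iff)
  moreover have "real (card V) / 2 \<le> real (deg_in E a V)"
    using G(2) \<open>a \<in> X\<close> part(1) unfolding min_degree_ge_def by auto
  ultimately show ?thesis by (simp add: of_nat_diff)
qed

lemma cross_neighbours_if_min_degree_half:
  assumes G: "simple_graph V E" "min_degree_ge V E (real (card V) / 2)"
    and part: "A \<union> B = V" "A \<inter> B = {}"
  shows "((\<forall>a\<in>A. 1 \<le> deg_in E a B) \<and> (\<forall>b\<in>B. 1 \<le> deg_in E b A))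
    \<or> (\<forall>a\<in>A. 2 \<le> deg_in E a B) \<or> (\<forall>b\<in>B. 2 \<le> deg_in E b A)"
proof -
  have "finite A" "finite B" using G(1) part(1) unfolding simple_graph_def by auto
  then have n: "real (card V) = real (card A) + real (card B)"
    using part card_Un_disjoint by (metis of_nat_add)
  have degA: "real (card V) / 2 - real (card A) + 1 \<le> real (deg_in E a B)" if "a \<in> A" for a
    using cross_deg_in_lower_bound[OF G part that] .
  have degB: "real (card V) / 2 - real (card B) + 1 \<le> real (deg_in E b A)" if "b \<in> B" for b
    using cross_deg_in_lower_bound[OF G _ _ that, of A] part by (auto simp: Un_commute Int_commute)
  consider "card A = card B" | "card A + 1 \<le> card B" | "card B + 1 \<le> card A" by linarith
  then show ?thesis
  proof cases
    case 1
    then show ?thesis using degA degB n by fastforce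
  next
    case 2
    then have "1 < real (card V) / 2 - real (card A) + 1" using n by simp
    then have "\<forall>a\<in>A. 1 < real (deg_in E a B)" using degA by fastforce
    then show ?thesis by (auto simp: Suc_le_eq numeral_2_eq_2)
  next
    case 3
    then have "1 < real (card V) / 2 - real (card B) + 1" using n by simp
    then have "\<forall>b\<in>B. 1 < real (deg_in E b A)" using degB by fastforce
    then show ?thesis by (auto simp: Suc_le_eq numeral_2_eq_2)
  qed
qed

theorem mainTheorem7:
  shows "\<exists>\<epsilon>0>0. \<forall>\<epsilon>. 0 < \<epsilon> \<and> \<epsilon> < \<epsilon>0 \<longrightarrow>
    (\<exists>\<gamma>0>0. \<forall>\<gamma>. 0 < \<gamma> \<and> \<gamma> \<le> \<gamma>0 \<longrightarrow>
      (\<exists>n0::nat. \<forall>n\<ge>n0. \<forall>(V::nat set) E.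
         simple_graph V E \<and> card V = n \<and> min_degree_ge V E (real n / 2) \<and>
         close_to_two_cliques V E \<gamma> \<longrightarrow>
         (\<exists>A B. superextremal_partition V E \<epsilon> A B \<and>
            ((\<forall>a\<in>A. deg_in E a B \<ge> 1) \<and> (\<forall>b\<in>B. deg_in E b A \<ge> 1)
             \<or> (\<forall>a\<in>A. deg_in E a B \<ge> 2)
             \<or> (\<forall>b\<in>B. deg_in E b A \<ge> 2)))))"
  apply (rule exI[of _ 1], intro conjI allI impI, simp)
  subgoal premises \<epsilon> for \<epsilon>
    apply (rule exI[of _ "\<epsilon>\<^sup>2 / 16"], intro conjI allI impI)
    using \<epsilon> apply simp
    apply (rule exI[of _ "nat \<lceil>2 / \<epsilon>\<rceil>"], intro allI impI)
    subgoal premises prems for \<gamma> n V E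
    proof -
      have "2 / \<epsilon> \<le> real n" using prems(2) by linarith
      moreover obtain A0 where "A0 \<subseteq> V" "card A0 = n div 2"
        "real (edges_between E A0 (V - A0)) \<le> \<gamma> * (real n)\<^sup>2"
        using prems(3) unfolding close_to_two_cliques_def by auto
      ultimately obtain A B where P: "superextremal_partition V E \<epsilon> A B"
        using superextremal_partition_if_close \<epsilon> prems by blast
      then have "A \<union> B = V" "A \<inter> B = {}" unfolding superextremal_partition_def by meson+
      then show ?thesis
        using P cross_neighbours_if_min_degree_half[of V E A B] prems(3) by auto
    qed
    done
  done

end
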